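(* Let $A$ be an $\mathbb N$-graded $k$-algebra generated by $A_1$ over $A_0$, and let $M$ be a point module over $A$. Then $\mathrm{End}_{\mathrm{QGr}\,A}(\pi^*M)\cong k$.
   Context: $k$ is a field. A point module is a graded right $A$-module $M=\bigoplus_{i\ge0}M_i$ with $M=M_0A$ and $\dim_kM_i=1$ for all $i\ge0$. $\mathrm{QGr}\,A$ is the quotient of the category of $\mathbb Z$-graded right $A$-modules by the torsion modules (modules each of whose elements $m$ satisfies $mA_{\ge n}=0$ for some $n$), with quotient functor $\pi^*$. *)

theory Defs
  imports Main
begin

(* The algebra A is the whole type 'a (a not necessarily commutative ring with 1).
   The k-algebra structure is a ring homomorphism phi : k -> A with central image. *)

definition direct_sum_decomp :: "('i \<Rightarrow> 'x::comm_monoid_add set) \<Rightarrow> bool" where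
  "direct_sum_decomp G \<longleftrightarrow>
     (\<forall>x. \<exists>!c :: 'i \<Rightarrow> 'x. finite {i. c i \<noteq> 0} \<and> (\<forall>i. c i \<in> G i)
            \<and> x = (\<Sum>i\<in>{i. c i \<noteq> 0}. c i))"

definition additive_subgroup :: "'x::ab_group_add set \<Rightarrow> bool" where
  "additive_subgroup S \<longleftrightarrow> 0 \<in> S \<and> (\<forall>x\<in>S. \<forall>y\<in>S. x + y \<in> S \<and> - x \<in> S)"

inductive_set ring_gen :: "'a::ring_1 set \<Rightarrow> 'a set" for S where
  base: "x \<in> S \<Longrightarrow> x \<in> ring_gen S"
| zero: "0 \<in> ring_gen S"
| one: "1 \<in> ring_gen S"
| add: "x \<in> ring_gen S \<Longrightarrow> y \<in> ring_gen S \<Longrightarrow> x + y \<in> ring_gen S"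
| neg: "x \<in> ring_gen S \<Longrightarrow> - x \<in> ring_gen S"
| mult: "x \<in> ring_gen S \<Longrightarrow> y \<in> ring_gen S \<Longrightarrow> x * y \<in> ring_gen S"

definition graded_k_algebra :: "('k::field \<Rightarrow> 'a::ring_1) \<Rightarrow> (nat \<Rightarrow> 'a set) \<Rightarrow> bool" where
  "graded_k_algebra phi Agr \<longleftrightarrow>
     (\<forall>c d. phi (c + d) = phi c + phi d \<and> phi (c * d) = phi c * phi d) \<and> phi 1 = 1 \<and>
     (\<forall>c a. phi c * a = a * phi c) \<and>
     (\<forall>i. additive_subgroup (Agr i) \<and> (\<forall>c. \<forall>a\<in>Agr i. phi c * a \<in> Agr i)) \<and>
     (\<forall>i j. \<forall>a\<in>Agr i. \<forall>b\<in>Agr j. a * b \<in> Agr (i + j)) \<and>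
     direct_sum_decomp Agr"

definition generated_in_degree_one :: "(nat \<Rightarrow> 'a::ring_1 set) \<Rightarrow> bool" where
  "generated_in_degree_one Agr \<longleftrightarrow> ring_gen (Agr 0 \<union> Agr 1) = UNIV"

definition Age :: "(nat \<Rightarrow> 'a::ring_1 set) \<Rightarrow> nat \<Rightarrow> 'a set" where
  "Age Agr n = {a. \<exists>ps. a = sum_list (map snd ps) \<and> (\<forall>(i, b)\<in>set ps. n \<le> i \<and> b \<in> Agr i)}"

(* Z-graded right A-module structure on the whole type 'm:
   act x a = x a, Mgr i = M_i *)
definition graded_right_module ::
  "(nat \<Rightarrow> 'a::ring_1 set) \<Rightarrow> ('m::ab_group_add \<Rightarrow> 'a \<Rightarrow> 'm) \<Rightarrow> (int \<Rightarrow> 'm set) \<Rightarrow> bool" where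
  "graded_right_module Agr act Mgr \<longleftrightarrow>
     (\<forall>x y a. act (x + y) a = act x a + act y a) \<and>
     (\<forall>x a b. act x (a + b) = act x a + act x b) \<and>
     (\<forall>x a b. act x (a * b) = act (act x a) b) \<and>
     (\<forall>x. act x 1 = x) \<and>
     (\<forall>i. additive_subgroup (Mgr i)) \<and>
     (\<forall>i j. \<forall>x\<in>Mgr i. \<forall>a\<in>Agr j. act x a \<in> Mgr (i + int j)) \<and>
     direct_sum_decomp Mgr"

(* point module: M = \<Oplus>_{i>=0} M_i, M = M_0 A, dim_k M_i = 1 for all i >= 0 *)
definition point_module ::
  "('k::field \<Rightarrow> 'a::ring_1) \<Rightarrow> (nat \<Rightarrow> 'a set) \<Rightarrow> ('m::ab_group_add \<Rightarrow> 'a \<Rightarrow> 'm) \<Rightarrow> (int \<Rightarrow> 'm set) \<Rightarrow> bool" where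
  "point_module phi Agr act Mgr \<longleftrightarrow>
     graded_right_module Agr act Mgr \<and>
     (\<forall>i<0. Mgr i = {0}) \<and>
     (\<forall>x. \<exists>ps. x = sum_list (map (\<lambda>(m, a). act m a) ps) \<and> (\<forall>(m, a)\<in>set ps. m \<in> Mgr 0)) \<and>
     (\<forall>i\<ge>0. \<exists>v\<in>Mgr i. v \<noteq> 0 \<and> Mgr i = {act v (phi c) | c. True})"

definition graded_submodule ::
  "('m::ab_group_add \<Rightarrow> 'a::ring_1 \<Rightarrow> 'm) \<Rightarrow> (int \<Rightarrow> 'm set) \<Rightarrow> 'm set \<Rightarrow> bool" where
  "graded_submodule act Mgr S \<longleftrightarrow>
     additive_subgroup S \<and> (\<forall>x\<in>S. \<forall>a. act x a \<in> S) \<and>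
     (\<forall>x\<in>S. \<exists>c :: int \<Rightarrow> 'm. finite {i. c i \<noteq> 0} \<and> (\<forall>i. c i \<in> Mgr i \<inter> S)
            \<and> x = (\<Sum>i\<in>{i. c i \<noteq> 0}. c i))"

definition torsion_sub ::
  "(nat \<Rightarrow> 'a::ring_1 set) \<Rightarrow> ('m::ab_group_add \<Rightarrow> 'a \<Rightarrow> 'm) \<Rightarrow> 'm set \<Rightarrow> bool" where
  "torsion_sub Agr act N \<longleftrightarrow> (\<forall>x\<in>N. \<exists>n. \<forall>a\<in>Age Agr n. act x a = 0)"

definition torsion_quot ::
  "(nat \<Rightarrow> 'a::ring_1 set) \<Rightarrow> ('m::ab_group_add \<Rightarrow> 'a \<Rightarrow> 'm) \<Rightarrow> 'm set \<Rightarrow> bool" where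
  "torsion_quot Agr act M' \<longleftrightarrow> (\<forall>x. \<exists>n. \<forall>a\<in>Age Agr n. act x a \<in> M')"

(* f represents a morphism M' -> M/N' in Gr A (degree-preserving A-linear map),
   f x being a representative of the image class *)
definition gr_hom_mod ::
  "('m::ab_group_add \<Rightarrow> 'a::ring_1 \<Rightarrow> 'm) \<Rightarrow> (int \<Rightarrow> 'm set) \<Rightarrow> 'm set \<Rightarrow> 'm set \<Rightarrow> ('m \<Rightarrow> 'm) \<Rightarrow> bool" where
  "gr_hom_mod act Mgr M' N' f \<longleftrightarrow>
     (\<forall>x\<in>M'. \<forall>y\<in>M'. f (x + y) - f x - f y \<in> N') \<and>
     (\<forall>x\<in>M'. \<forall>a. f (act x a) - act (f x) a \<in> N') \<and>
     (\<forall>i. \<forall>x\<in>M' \<inter> Mgr i. \<exists>y\<in>Mgr i. f x - y \<in> N')"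

(* representatives of End_{QGr A}(pi^* M) in Gabriel's construction of the quotient category:
   Hom(pi M, pi M) = colim_{M',N'} Hom_{Gr A}(M', M/N'), M/M' torsion, N' torsion *)
definition qgr_end_rep ::
  "(nat \<Rightarrow> 'a::ring_1 set) \<Rightarrow> ('m::ab_group_add \<Rightarrow> 'a \<Rightarrow> 'm) \<Rightarrow> (int \<Rightarrow> 'm set)
     \<Rightarrow> 'm set \<times> 'm set \<times> ('m \<Rightarrow> 'm) \<Rightarrow> bool" where
  "qgr_end_rep Agr act Mgr t \<longleftrightarrow> (case t of (M', N', f) \<Rightarrow>
     graded_submodule act Mgr M' \<and> torsion_quot Agr act M' \<and>
     graded_submodule act Mgr N' \<and> torsion_sub Agr act N' \<and>
     gr_hom_mod act Mgr M' N' f)"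

definition qgr_end_eq ::
  "(nat \<Rightarrow> 'a::ring_1 set) \<Rightarrow> ('m::ab_group_add \<Rightarrow> 'a \<Rightarrow> 'm) \<Rightarrow> (int \<Rightarrow> 'm set)
     \<Rightarrow> 'm set \<times> 'm set \<times> ('m \<Rightarrow> 'm) \<Rightarrow> 'm set \<times> 'm set \<times> ('m \<Rightarrow> 'm) \<Rightarrow> bool" where
  "qgr_end_eq Agr act Mgr t1 t2 \<longleftrightarrow> (case t1 of (M1, N1, f1) \<Rightarrow> case t2 of (M2, N2, f2) \<Rightarrow>
     (\<exists>M3 N3. graded_submodule act Mgr M3 \<and> torsion_quot Agr act M3 \<and> M3 \<subseteq> M1 \<inter> M2 \<and>
        graded_submodule act Mgr N3 \<and> torsion_sub Agr act N3 \<and> N1 \<union> N2 \<subseteq> N3 \<and>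
        (\<forall>x\<in>M3. f1 x - f2 x \<in> N3)))"

(* the structure map k -> End_{QGr A}(pi^* M): c |-> class of (right multiplication by phi c) *)
definition qgr_scalar ::
  "('k::field \<Rightarrow> 'a::ring_1) \<Rightarrow> ('m::ab_group_add \<Rightarrow> 'a \<Rightarrow> 'm) \<Rightarrow> 'k \<Rightarrow> 'm set \<times> 'm set \<times> ('m \<Rightarrow> 'm)" where
  "qgr_scalar phi act c = (UNIV, {0}, (\<lambda>x. act x (phi c)))"

end

theory Submission
  imports Defs
begin

text \<open>A point module is torsion-free: if \<open>M\<^sub>j A\<^sub>1 = 0\<close>, then the elements of degree at most
  \<open>j\<close> form a subgroup stable under \<open>A\<^sub>0 \<union> A\<^sub>1\<close>, hence under all of \<open>A\<close>; it contains \<open>M\<^sub>0\<close>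
  and so all of \<open>M = M\<^sub>0 A\<close>, contradicting \<open>M\<^sub>j\<^sub>+\<^sub>1 \<noteq> 0\<close>. Since every \<open>M\<^sub>j\<close> is a line, every
  nonzero homogeneous element is then moved to a nonzero element by \<open>A\<^sub>n\<close> for each \<open>n > 0\<close>.
  Hence torsion submodules vanish, every morphism \<open>M' \<rightarrow> M/N'\<close> is an honest graded
  homomorphism \<open>M' \<rightarrow> M\<close>, it acts on each (one-dimensional) homogeneous piece by a scalar,
  and moving two nonzero homogeneous elements of \<open>M'\<close> into a common degree shows that
  these scalars agree. The scalar is unique since a nonzero element of \<open>M'\<close> witnesses it.\<close>

locale graded_group =
  fixes G :: "'i \<Rightarrow> 'x::ab_group_add set"
  assumes direct_sum: "direct_sum_decomp G"
    and subgroup: "additive_subgroup (G i)"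
begin

definition component :: "'x \<Rightarrow> 'i \<Rightarrow> 'x" where
  "component x = (THE c. finite {i. c i \<noteq> 0} \<and> (\<forall>i. c i \<in> G i) \<and> x = (\<Sum>i\<in>{i. c i \<noteq> 0}. c i))"

lemma component_props:
  "finite {i. component x i \<noteq> 0} \<and> (\<forall>i. component x i \<in> G i)
     \<and> x = (\<Sum>i\<in>{i. component x i \<noteq> 0}. component x i)"
proof -
  have "\<exists>!c. finite {i. c i \<noteq> 0} \<and> (\<forall>i. c i \<in> G i) \<and> x = (\<Sum>i\<in>{i. c i \<noteq> 0}. c i)"
    using direct_sum unfolding direct_sum_decomp_def by blast
  then show ?thesis unfolding component_def by (rule theI')
qed

lemma finite_support_component: "finite {i. component x i \<noteq> 0}"
  using component_props by blast

lemma component_in: "component x i \<in> G i"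
  using component_props by blast

lemma sum_components:
  assumes "finite S" "{i. component x i \<noteq> 0} \<subseteq> S"
  shows "x = (\<Sum>i\<in>S. component x i)"
proof -
  have "(\<Sum>i\<in>S. component x i) = (\<Sum>i\<in>{i. component x i \<noteq> 0}. component x i)"
    by (rule sum.mono_neutral_right[OF assms]) blast
  with component_props show ?thesis by simp
qed

lemma component_eqI:
  assumes "finite S" "\<And>i. i \<notin> S \<Longrightarrow> c i = 0" "\<And>i. c i \<in> G i" "x = (\<Sum>i\<in>S. c i)"
  shows "component x = c"
  unfolding component_def
proof (rule the1_equality)
  show "\<exists>!c. finite {i. c i \<noteq> 0} \<and> (\<forall>i. c i \<in> G i) \<and> x = (\<Sum>i\<in>{i. c i \<noteq> 0}. c i)"
    using direct_sum by (simp add: direct_sum_decomp_def)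
  have supp: "{i. c i \<noteq> 0} \<subseteq> S" using assms(2) by blast
  have "(\<Sum>i\<in>S. c i) = (\<Sum>i\<in>{i. c i \<noteq> 0}. c i)"
    by (rule sum.mono_neutral_right[OF assms(1) supp]) auto
  then show "finite {i. c i \<noteq> 0} \<and> (\<forall>i. c i \<in> G i) \<and> x = (\<Sum>i\<in>{i. c i \<noteq> 0}. c i)"
    using finite_subset[OF supp assms(1)] assms(3,4) by simp
qed

lemma component_zero: "component 0 = (\<lambda>i. 0)"
  by (rule component_eqI[where S="{}"]) (use subgroup in \<open>auto simp: additive_subgroup_def\<close>)

lemma component_homogeneous: "x \<in> G k \<Longrightarrow> component x = (\<lambda>i. if i = k then x else 0)"
  by (rule component_eqI[where S="{k}"]) (use subgroup in \<open>auto simp: additive_subgroup_def\<close>)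

lemma component_add: "component (x + y) = (\<lambda>i. component x i + component y i)"
proof (rule component_eqI)
  let ?S = "{i. component x i \<noteq> 0} \<union> {i. component y i \<noteq> 0}"
  show fin: "finite ?S" using finite_support_component by simp
  show "\<And>i. i \<notin> ?S \<Longrightarrow> component x i + component y i = 0" by auto
  show "\<And>i. component x i + component y i \<in> G i"
    using component_in subgroup by (simp add: additive_subgroup_def)
  have "x = (\<Sum>i\<in>?S. component x i)" "y = (\<Sum>i\<in>?S. component y i)"
    by (rule sum_components[OF fin]; auto)+
  then show "x + y = (\<Sum>i\<in>?S. component x i + component y i)"
    by (simp add: sum.distrib)
qed

lemma component_neg: "component (- x) = (\<lambda>i. - component x i)"
  using component_add[of x "- x"] by (auto simp: component_zero fun_eq_iff add_eq_0_iff)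

lemma component_sum:
  "finite T \<Longrightarrow> component (\<Sum>t\<in>T. g t) = (\<lambda>i. \<Sum>t\<in>T. component (g t) i)"
  by (induction T rule: finite_induct) (auto simp: component_zero component_add)

end

locale graded_point_module =
  fixes phi :: "'k::field \<Rightarrow> 'a::ring_1"
    and Agr :: "nat \<Rightarrow> 'a set"
    and act :: "'m::ab_group_add \<Rightarrow> 'a \<Rightarrow> 'm"
    and Mgr :: "int \<Rightarrow> 'm set"
  assumes graded_algebra: "graded_k_algebra phi Agr"
    and point: "point_module phi Agr act Mgr"
begin

lemma act_add_left: "act (x + y) a = act x a + act y a"
  and act_add_right: "act x (a + b) = act x a + act x b"
  and act_mult: "act x (a * b) = act (act x a) b"
  and act_one: "act x 1 = x"
  and Mgr_subgroup: "additive_subgroup (Mgr i)"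
  and Mgr_act: "x \<in> Mgr i \<Longrightarrow> a \<in> Agr j \<Longrightarrow> act x a \<in> Mgr (i + int j)"
  and Mgr_direct_sum: "direct_sum_decomp Mgr"
  using point unfolding point_module_def graded_right_module_def by blast+

lemma Mgr_negative: "i < 0 \<Longrightarrow> Mgr i = {0}"
  and generated_in_degree_zero:
    "\<exists>ps. x = sum_list (map (\<lambda>(m, a). act m a) ps) \<and> (\<forall>(m, a)\<in>set ps. m \<in> Mgr 0)"
  and Mgr_line: "i \<ge> 0 \<Longrightarrow> \<exists>v\<in>Mgr i. v \<noteq> 0 \<and> Mgr i = {act v (phi c) | c. True}"
  using point unfolding point_module_def by blast+

lemma phi_add: "phi (c + d) = phi c + phi d"
  and phi_mult: "phi (c * d) = phi c * phi d"
  and phi_one: "phi 1 = 1"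
  and phi_central: "phi c * a = a * phi c"
  and Agr_mult: "a \<in> Agr i \<Longrightarrow> b \<in> Agr j \<Longrightarrow> a * b \<in> Agr (i + j)"
  and Agr_phi: "a \<in> Agr i \<Longrightarrow> phi c * a \<in> Agr i"
  using graded_algebra unfolding graded_k_algebra_def by blast+

lemma phi_diff: "phi (c - d) = phi c - phi d"
  using phi_add[of "c - d" d] by (simp add: eq_diff_eq)

lemma phi_zero: "phi 0 = 0"
  using phi_diff[of 0 0] by simp

lemma act_zero_left: "act 0 a = 0"
  using act_add_left[of 0 0 a] by simp

lemma act_diff_right: "act x (a - b) = act x a - act x b"
  using act_add_right[of x "a - b" b] by (simp add: eq_diff_eq)

lemma act_zero_right: "act x 0 = 0"
  using act_diff_right[of x 0 0] by simp

lemma act_neg_right: "act x (- a) = - act x a"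
  using act_diff_right[of x 0 a] by (simp add: act_zero_right)

lemma act_sum_left: "finite S \<Longrightarrow> act (\<Sum>i\<in>S. g i) a = (\<Sum>i\<in>S. act (g i) a)"
  by (induction S rule: finite_induct) (auto simp: act_zero_left act_add_left)

lemma act_phi_phi: "act (act y (phi c)) (phi d) = act y (phi (c * d))"
  by (simp add: act_mult phi_mult)

sublocale M: graded_group Mgr
  by unfold_locales (fact Mgr_direct_sum, fact Mgr_subgroup)

lemma graded_submodule_homogeneous_decomp:
  assumes "graded_submodule act Mgr S" "x \<in> S"
  shows "\<exists>c. finite {i. c i \<noteq> 0} \<and> (\<forall>i. c i \<in> Mgr i \<inter> S) \<and> x = (\<Sum>i\<in>{i. c i \<noteq> 0}. c i)"
  using assms unfolding graded_submodule_def by blast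

lemma Mgr_nonzero_nonneg: "y \<in> Mgr j \<Longrightarrow> y \<noteq> 0 \<Longrightarrow> j \<ge> 0"
  using Mgr_negative[of j] by force

lemma Mgr_scalar_multiple:
  assumes y: "y \<in> Mgr j" "y \<noteq> 0" and x: "x \<in> Mgr j"
  shows "\<exists>e. x = act y (phi e)"
proof -
  obtain v where v: "Mgr j = {act v (phi c) | c. True}"
    using Mgr_line Mgr_nonzero_nonneg[OF y] by blast
  obtain c1 c2 where c: "y = act v (phi c1)" "x = act v (phi c2)" using x y v by blast
  have "c1 \<noteq> 0" using c(1) y(2) by (auto simp: phi_zero act_zero_right)
  then have "x = act y (phi (c2 / c1))" using c by (simp add: act_phi_phi)
  then show ?thesis ..
qed

lemma act_phi_cancel:
  assumes "y \<noteq> 0" "act y (phi c) = act y (phi d)"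
  shows "c = d"
proof (rule ccontr)
  assume "c \<noteq> d"
  have "act y (phi (c - d)) = 0" using assms(2) by (simp add: phi_diff act_diff_right)
  then have "act y (phi ((c - d) * inverse (c - d))) = 0"
    by (metis act_phi_phi act_zero_left)
  with \<open>c \<noteq> d\<close> assms(1) show False by (simp add: phi_one act_one)
qed

definition degree_le :: "int \<Rightarrow> 'm set" where
  "degree_le j = {y. \<forall>k>j. M.component y k = 0}"

lemma degree_le_zero: "0 \<in> degree_le j"
  by (simp add: degree_le_def M.component_zero)

lemma degree_le_add: "x \<in> degree_le j \<Longrightarrow> y \<in> degree_le j \<Longrightarrow> x + y \<in> degree_le j"
  by (simp add: degree_le_def M.component_add)

lemma degree_le_neg: "x \<in> degree_le j \<Longrightarrow> - x \<in> degree_le j"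
  by (simp add: degree_le_def M.component_neg)

lemma degree_le_sum: "finite T \<Longrightarrow> (\<And>t. t \<in> T \<Longrightarrow> g t \<in> degree_le j) \<Longrightarrow> (\<Sum>t\<in>T. g t) \<in> degree_le j"
  by (simp add: degree_le_def M.component_sum)

lemma degree_le_sum_list: "(\<And>x. x \<in> set xs \<Longrightarrow> x \<in> degree_le j) \<Longrightarrow> sum_list xs \<in> degree_le j"
  by (induction xs) (auto simp: degree_le_zero degree_le_add)

lemma degree_le_homogeneous: "x \<in> Mgr l \<Longrightarrow> l \<le> j \<Longrightarrow> x \<in> degree_le j"
  by (simp add: degree_le_def M.component_homogeneous)

lemma degree_le_component: "y \<in> degree_le j \<Longrightarrow> M.component y i \<noteq> 0 \<Longrightarrow> i \<le> j"
  unfolding degree_le_def using not_le by blast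

end

locale graded_point_module_gen1 = graded_point_module +
  assumes generated_in_degree_one: "generated_in_degree_one Agr"
begin

lemma degree_le_act_closed:
  assumes annihilated: "\<And>x b. x \<in> Mgr j \<Longrightarrow> b \<in> Agr 1 \<Longrightarrow> act x b = 0"
    and y: "y \<in> degree_le j"
  shows "act y a \<in> degree_le j"
proof -
  have gen: "act y b \<in> degree_le j" if y: "y \<in> degree_le j" and b: "b \<in> Agr 0 \<union> Agr 1" for y b
  proof -
    let ?S = "{i. M.component y i \<noteq> 0}"
    have fin: "finite ?S" by (rule M.finite_support_component)
    have "act (M.component y i) b \<in> degree_le j" if "i \<in> ?S" for i
    proof -
      have "i \<le> j" using degree_le_component[OF y] that by simp
      moreover have yi: "M.component y i \<in> Mgr i" by (rule M.component_in)
      ultimately show ?thesis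
        using b Mgr_act[OF yi] annihilated degree_le_homogeneous degree_le_zero
        by (cases "i = j") fastforce+
    qed
    moreover have "act y b = (\<Sum>i\<in>?S. act (M.component y i) b)"
      using M.sum_components[OF fin, of y] act_sum_left[OF fin, of "M.component y"] by simp
    ultimately show ?thesis using degree_le_sum[OF fin] by simp
  qed
  have "\<forall>y\<in>degree_le j. act y a \<in> degree_le j" if "a \<in> ring_gen (Agr 0 \<union> Agr 1)" for a
    using that
    by (induction rule: ring_gen.induct)
       (auto simp: gen act_zero_right degree_le_zero act_one act_add_right degree_le_add
                   act_neg_right degree_le_neg act_mult)
  with generated_in_degree_one y show ?thesis
    unfolding generated_in_degree_one_def by blast
qed

lemma Mgr_not_annihilated_by_degree_one:
  assumes "j \<ge> 0"
  shows "\<exists>x\<in>Mgr j. \<exists>b\<in>Agr 1. act x b \<noteq> 0"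
proof (rule ccontr)
  assume "\<not> ?thesis"
  then have annihilated: "\<And>x b. x \<in> Mgr j \<Longrightarrow> b \<in> Agr 1 \<Longrightarrow> act x b = 0" by blast
  obtain z where z: "z \<in> Mgr (j + 1)" "z \<noteq> 0" using Mgr_line[of "j + 1"] assms by auto
  obtain ps where ps: "z = sum_list (map (\<lambda>(m, a). act m a) ps)" "\<forall>(m, a)\<in>set ps. m \<in> Mgr 0"
    using generated_in_degree_zero by blast
  have "act m a \<in> degree_le j" if "(m, a) \<in> set ps" for m a
    using ps(2) that assms degree_le_homogeneous[of m 0 j]
    by (blast intro: degree_le_act_closed[OF annihilated])
  then have "z \<in> degree_le j" unfolding ps(1) by (intro degree_le_sum_list) auto
  then have "M.component z (j + 1) = 0" unfolding degree_le_def by simp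
  with z show False by (simp add: M.component_homogeneous)
qed

lemma nonzero_act_degree_one:
  assumes y: "y \<in> Mgr j" "y \<noteq> 0"
  shows "\<exists>b\<in>Agr 1. act y b \<noteq> 0"
proof -
  obtain x b where xb: "x \<in> Mgr j" "b \<in> Agr 1" "act x b \<noteq> 0"
    using Mgr_not_annihilated_by_degree_one Mgr_nonzero_nonneg[OF y] by blast
  obtain e where "x = act y (phi e)" using Mgr_scalar_multiple[OF y xb(1)] by blast
  then have "act y (phi e * b) \<noteq> 0" using xb(3) by (simp add: act_mult)
  then show ?thesis using Agr_phi[OF xb(2)] by blast
qed

lemma nonzero_act_positive_degree:
  assumes y: "y \<in> Mgr j" "y \<noteq> 0"
  shows "\<exists>a\<in>Agr (Suc n). act y a \<noteq> 0 \<and> act y a \<in> Mgr (j + int (Suc n))"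
proof (induction n)
  case 0
  then show ?case using nonzero_act_degree_one[OF y] Mgr_act[OF y(1)] by fastforce
next
  case (Suc n)
  then obtain a where a: "a \<in> Agr (Suc n)" "act y a \<noteq> 0" "act y a \<in> Mgr (j + int (Suc n))"
    by blast
  obtain b where b: "b \<in> Agr 1" "act (act y a) b \<noteq> 0"
    using nonzero_act_degree_one[OF a(3) a(2)] by blast
  have "a * b \<in> Agr (Suc (Suc n))" using Agr_mult[OF a(1) b(1)] by simp
  moreover have "act y (a * b) \<in> Mgr (j + int (Suc (Suc n)))"
    using Mgr_act[OF a(3) b(1)] by (simp add: act_mult add.assoc)
  ultimately show ?case using b(2) by (intro bexI[of _ "a * b"] conjI) (simp_all add: act_mult)
qed

lemma Age_homogeneous: "a \<in> Agr m \<Longrightarrow> n \<le> m \<Longrightarrow> a \<in> Age Agr n"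
  unfolding Age_def by (rule CollectI, rule exI[of _ "[(m, a)]"]) auto

lemma homogeneous_torsion_zero:
  assumes "x \<in> Mgr i" "\<forall>a\<in>Age Agr n. act x a = 0"
  shows "x = 0"
  using nonzero_act_positive_degree[OF assms(1), of n] assms(2) Age_homogeneous[of _ "Suc n" n]
  by fastforce

lemma torsion_submodule_zero:
  assumes "graded_submodule act Mgr N" "torsion_sub Agr act N" "x \<in> N"
  shows "x = 0"
proof -
  obtain c where c: "\<forall>i. c i \<in> Mgr i \<inter> N" "x = (\<Sum>i\<in>{i. c i \<noteq> 0}. c i)"
    using graded_submodule_homogeneous_decomp[OF assms(1,3)] by blast
  have "c i = 0" for i
    using assms(2) c(1) homogeneous_torsion_zero unfolding torsion_sub_def by blast
  with c(2) show ?thesis by simp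
qed

lemma torsion_quot_nonzero_homogeneous:
  assumes "torsion_quot Agr act M'"
  obtains w d where "w \<in> M'" "w \<in> Mgr (int d)" "w \<noteq> 0"
proof -
  obtain v where v: "v \<in> Mgr 0" "v \<noteq> 0" using Mgr_line[of 0] by auto
  obtain n where n: "\<forall>a\<in>Age Agr n. act v a \<in> M'"
    using assms unfolding torsion_quot_def by blast
  obtain a where a: "a \<in> Agr (Suc n)" "act v a \<noteq> 0" "act v a \<in> Mgr (int (Suc n))"
    using nonzero_act_positive_degree[OF v] by auto
  have "act v a \<in> M'" using n Age_homogeneous[OF a(1)] by simp
  with a that show ?thesis by blast
qed

lemma graded_hom_scalar_homogeneous:
  assumes M': "\<And>x a. x \<in> M' \<Longrightarrow> act x a \<in> M'"
    and lin: "\<And>x a. x \<in> M' \<Longrightarrow> f (act x a) = act (f x) a"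
    and deg: "\<And>x i. x \<in> M' \<Longrightarrow> x \<in> Mgr i \<Longrightarrow> f x \<in> Mgr i"
    and w0: "w0 \<in> M'" "w0 \<in> Mgr (int d)" "w0 \<noteq> 0" "f w0 = act w0 (phi l)"
    and w: "w \<in> M'" "w \<in> Mgr i" "w \<noteq> 0"
  shows "f w = act w (phi l)"
proof -
  have shift: "f (act y a) = act (act y a) (phi m)" if "y \<in> M'" "f y = act y (phi m)" for y a m
    using lin[OF that(1)] that(2) by (simp flip: act_mult add: phi_central)
  obtain m where m: "f w = act w (phi m)"
    using Mgr_scalar_multiple[OF w(2,3) deg[OF w(1,2)]] by blast
  obtain i' where i': "i = int i'" using Mgr_nonzero_nonneg[OF w(2,3)] nonneg_int_cases by metis
  text \<open>Move \<open>w\<close> and \<open>w0\<close> into the common degree \<open>i + d + 1\<close>.\<close>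
  obtain a where a: "act w a \<noteq> 0" "act w a \<in> Mgr (i + int (Suc d))"
    using nonzero_act_positive_degree[OF w(2,3)] by blast
  obtain a' where a': "act w0 a' \<noteq> 0" "act w0 a' \<in> Mgr (i + int (Suc d))"
    using nonzero_act_positive_degree[OF w0(2,3), of i'] i' by (auto simp: add_ac)
  obtain e where e: "act w0 a' = act (act w a) (phi e)"
    using Mgr_scalar_multiple[OF a(2,1) a'(2)] by blast
  have "act (act w0 a') (phi l) = f (act w0 a')" using shift[OF w0(1,4)] by simp
  also have "\<dots> = act (act w0 a') (phi m)"
    using shift[OF M'[OF w(1)] shift[OF w(1) m]] e by (simp add: act_phi_phi mult.commute)
  finally have "l = m" using act_phi_cancel[OF a'(1)] by simp
  with m show ?thesis by simp
qed

lemma graded_hom_scalar: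
  assumes M': "graded_submodule act Mgr M'" "torsion_quot Agr act M'"
    and add: "\<And>x y. x \<in> M' \<Longrightarrow> y \<in> M' \<Longrightarrow> f (x + y) = f x + f y"
    and lin: "\<And>x a. x \<in> M' \<Longrightarrow> f (act x a) = act (f x) a"
    and deg: "\<And>x i. x \<in> M' \<Longrightarrow> x \<in> Mgr i \<Longrightarrow> f x \<in> Mgr i"
  shows "\<exists>l. \<forall>x\<in>M'. f x = act x (phi l)"
proof -
  have sub: "additive_subgroup M'" and act_closed: "\<And>x a. x \<in> M' \<Longrightarrow> act x a \<in> M'"
    using M'(1) unfolding graded_submodule_def by blast+
  obtain w0 d where w0: "w0 \<in> M'" "w0 \<in> Mgr (int d)" "w0 \<noteq> 0"
    using torsion_quot_nonzero_homogeneous[OF M'(2)] .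
  obtain l where l: "f w0 = act w0 (phi l)"
    using Mgr_scalar_multiple[OF w0(2,3) deg[OF w0(1,2)]] by blast
  have f0: "f 0 = 0" using add[of 0 0] sub by (simp add: additive_subgroup_def)
  have homogeneous: "f w = act w (phi l)" if "w \<in> M'" "w \<in> Mgr i" for w i
    using graded_hom_scalar_homogeneous[OF act_closed lin deg w0 l that] f0
    by (cases "w = 0") (auto simp: act_zero_left)
  have sum: "f (\<Sum>i\<in>T. c i) = (\<Sum>i\<in>T. f (c i)) \<and> (\<Sum>i\<in>T. c i) \<in> M'"
    if "finite T" "\<And>i. i \<in> T \<Longrightarrow> c i \<in> M'" for T and c :: "int \<Rightarrow> _"
    using that
  proof (induction T rule: finite_induct)
    case empty
    show ?case using f0 sub by (simp add: additive_subgroup_def)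
  next
    case (insert t T)
    then have "c t \<in> M'" "(\<Sum>i\<in>T. c i) \<in> M'" "f (\<Sum>i\<in>T. c i) = (\<Sum>i\<in>T. f (c i))"
      by blast+
    with insert.hyps show ?case
      using add[of "c t" "\<Sum>i\<in>T. c i"] sub by (simp add: additive_subgroup_def)
  qed
  have "f x = act x (phi l)" if x: "x \<in> M'" for x
  proof -
    obtain c where c: "finite {i. c i \<noteq> 0}" "\<forall>i. c i \<in> Mgr i \<inter> M'"
      "x = (\<Sum>i\<in>{i. c i \<noteq> 0}. c i)"
      using graded_submodule_homogeneous_decomp[OF M'(1) x] by blast
    have "f x = (\<Sum>i\<in>{i. c i \<noteq> 0}. f (c i))"
      unfolding c(3) using sum[OF c(1)] c(2) by blast
    also have "\<dots> = (\<Sum>i\<in>{i. c i \<noteq> 0}. act (c i) (phi l))"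
      using homogeneous c(2) by (intro sum.cong) blast+
    also have "\<dots> = act x (phi l)"
      unfolding c(3) by (rule act_sum_left[OF c(1), symmetric])
    finally show ?thesis .
  qed
  then show ?thesis by blast
qed

lemma qgr_end_rep_eq_scalar:
  assumes rep: "qgr_end_rep Agr act Mgr (M', N', f)"
  shows "\<exists>c. qgr_end_eq Agr act Mgr (M', N', f) (qgr_scalar phi act c)"
proof -
  have M': "graded_submodule act Mgr M'" "torsion_quot Agr act M'"
    and N': "graded_submodule act Mgr N'" "torsion_sub Agr act N'"
    and f: "gr_hom_mod act Mgr M' N' f"
    using rep unfolding qgr_end_rep_def by auto
  have N'_zero: "N' = {0}"
    using torsion_submodule_zero[OF N'] N'(1)
    unfolding graded_submodule_def additive_subgroup_def by blast
  have "\<exists>l. \<forall>x\<in>M'. f x = act x (phi l)"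
    by (rule graded_hom_scalar[OF M'])
       (use f N'_zero in \<open>auto simp: gr_hom_mod_def diff_eq_eq\<close>)
  then obtain l where "\<forall>x\<in>M'. f x = act x (phi l)" ..
  then have "\<forall>x\<in>M'. f x - act x (phi l) \<in> N'"
    using N'_zero by simp
  then show ?thesis
    unfolding qgr_end_eq_def qgr_scalar_def using M' N' N'_zero by blast
qed

lemma qgr_scalar_inj:
  assumes "qgr_end_eq Agr act Mgr (qgr_scalar phi act c) (qgr_scalar phi act d)"
  shows "c = d"
proof -
  obtain M3 N3 where M3: "torsion_quot Agr act M3"
    and N3: "graded_submodule act Mgr N3" "torsion_sub Agr act N3"
    and diff: "\<forall>x\<in>M3. act x (phi c) - act x (phi d) \<in> N3"
    using assms unfolding qgr_end_eq_def qgr_scalar_def by auto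
  obtain w n where "w \<in> M3" "w \<in> Mgr (int n)" "w \<noteq> 0"
    using torsion_quot_nonzero_homogeneous[OF M3] .
  then show ?thesis
    using torsion_submodule_zero[OF N3] diff act_phi_cancel by fastforce
qed

end

theorem lemma10p1:
  fixes phi :: "'k::field \<Rightarrow> 'a::ring_1"
    and Agr :: "nat \<Rightarrow> 'a set"
    and act :: "'m::ab_group_add \<Rightarrow> 'a \<Rightarrow> 'm"
    and Mgr :: "int \<Rightarrow> 'm set"
  assumes "graded_k_algebra phi Agr"
    and "generated_in_degree_one Agr"
    and "point_module phi Agr act Mgr"
  shows "(\<forall>t. qgr_end_rep Agr act Mgr t \<longrightarrow> (\<exists>c. qgr_end_eq Agr act Mgr t (qgr_scalar phi act c)))
       \<and> (\<forall>c d. qgr_end_eq Agr act Mgr (qgr_scalar phi act c) (qgr_scalar phi act d) \<longrightarrow> c = d)"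
proof -
  interpret graded_point_module_gen1 phi Agr act Mgr
    using assms by unfold_locales
  show ?thesis
    using qgr_end_rep_eq_scalar qgr_scalar_inj by (metis prod_cases3)
qed

end
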